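(* A bipartite graph $G$ satisfies $\mathrm{diss}(G)=\alpha(G)$ if and only if there is no induced matching $N$ in $G$ such that every maximum matching of $G$ contains at least one edge of $N$.
   Context: All graphs are finite, simple and undirected. A set $I$ of vertices of a graph $G$ is a dissociation set if the induced subgraph $G[I]$ has maximum degree at most $1$; $\mathrm{diss}(G)$ is the maximum order of a dissociation set in $G$. $\alpha(G)$ is the independence number. An induced matching is a matching $N$ such that the subgraph of $G$ induced by the vertices covered by $N$ has edge set exactly $N$. *)

theory Defs
  imports Main
begin

definition simple_graph :: "'a set \<Rightarrow> 'a set set \<Rightarrow> bool" where
  "simple_graph V E \<longleftrightarrow> finite V \<and> (\<forall>e\<in>E. e \<subseteq> V \<and> card e = 2)"

definition bipartite :: "'a set \<Rightarrow> 'a set set \<Rightarrow> bool" where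
  "bipartite V E \<longleftrightarrow> (\<exists>A B. A \<union> B = V \<and> A \<inter> B = {} \<and>
     (\<forall>e\<in>E. e \<inter> A \<noteq> {} \<and> e \<inter> B \<noteq> {}))"

definition independent_set :: "'a set \<Rightarrow> 'a set set \<Rightarrow> 'a set \<Rightarrow> bool" where
  "independent_set V E I \<longleftrightarrow> I \<subseteq> V \<and> (\<forall>u\<in>I. \<forall>v\<in>I. {u, v} \<notin> E)"

definition dissociation_set :: "'a set \<Rightarrow> 'a set set \<Rightarrow> 'a set \<Rightarrow> bool" where
  "dissociation_set V E I \<longleftrightarrow> I \<subseteq> V \<and> (\<forall>v\<in>I. card {u\<in>I. {u, v} \<in> E} \<le> 1)"

definition independence_number :: "'a set \<Rightarrow> 'a set set \<Rightarrow> nat" where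
  "independence_number V E = Max (card ` {I. independent_set V E I})"

definition diss :: "'a set \<Rightarrow> 'a set set \<Rightarrow> nat" where
  "diss V E = Max (card ` {I. dissociation_set V E I})"

definition matching :: "'a set set \<Rightarrow> 'a set set \<Rightarrow> bool" where
  "matching E M \<longleftrightarrow> M \<subseteq> E \<and> (\<forall>e\<in>M. \<forall>f\<in>M. e \<noteq> f \<longrightarrow> e \<inter> f = {})"

definition maximum_matching :: "'a set set \<Rightarrow> 'a set set \<Rightarrow> bool" where
  "maximum_matching E M \<longleftrightarrow> matching E M \<and> (\<forall>M'. matching E M' \<longrightarrow> card M' \<le> card M)"

definition induced_matching :: "'a set set \<Rightarrow> 'a set set \<Rightarrow> bool" where
  "induced_matching E N \<longleftrightarrow> matching E N \<and> {e\<in>E. e \<subseteq> \<Union>N} = N"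

end

theory Submission
  imports Defs
begin

text \<open>In a bipartite graph the Koenig-Egervary theorem gives \<open>\<alpha>(G) + \<nu>(G) = |V|\<close>, \<open>\<nu>\<close> the matching number, so
  the claim is that \<open>diss(G) + \<nu>(G) > |V|\<close> exactly when some induced matching \<open>N\<close> meets every
  maximum matching. Given such \<open>N\<close>, a maximum matching of \<open>G - N\<close> is not maximum in \<open>G\<close>, so a
  minimum vertex cover \<open>C\<close> of \<open>G - N\<close> has fewer than \<open>\<nu>(G)\<close> vertices; every edge of \<open>G\<close> inside
  \<open>V - C\<close> lies in the matching \<open>N\<close>, so \<open>V - C\<close> is a dissociation set. Conversely the edges inside a
  maximum dissociation set \<open>D\<close> form an induced matching, and a matching avoiding them has an end of
  every edge in \<open>V - D\<close>, hence at most \<open>|V| - diss(G) < \<nu>(G)\<close> edges.\<close>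

section \<open>Hall's theorem\<close>

lemma hall_condition_minus_tight_set:
  assumes hall: "\<And>S. S \<subseteq> A \<Longrightarrow> card S \<le> card (\<Union>(N ` S))"
    and "finite A" and S: "S \<subseteq> A" "card (\<Union>(N ` S)) \<le> card S" and T: "T \<subseteq> A - S"
  shows "card T \<le> card (\<Union>a\<in>T. N a - \<Union>(N ` S))"
proof -
  have "finite T" "finite S" using T S \<open>finite A\<close> finite_subset by blast+
  then have "card T + card S = card (T \<union> S)" using T by (subst card_Un_disjoint) auto
  also have "\<dots> \<le> card (\<Union>(N ` (T \<union> S)))" using T S by (intro hall) auto
  also have "\<Union>(N ` (T \<union> S)) = (\<Union>a\<in>T. N a - \<Union>(N ` S)) \<union> \<Union>(N ` S)" by auto
  also have "card \<dots> \<le> card (\<Union>a\<in>T. N a - \<Union>(N ` S)) + card (\<Union>(N ` S))" by (rule card_Un_le)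
  finally show ?thesis using S(2) by linarith
qed

lemma hall_condition_minus_point:
  assumes surplus: "\<And>S. S \<noteq> {} \<Longrightarrow> S \<subset> A \<Longrightarrow> card S < card (\<Union>(N ` S))"
    and "a \<in> A" and T: "T \<subseteq> A - {a}"
  shows "card T \<le> card (\<Union>x\<in>T. N x - {b})"
proof (cases "T = {}")
  case False
  then have lt: "card T < card (\<Union>(N ` T))" using surplus T \<open>a \<in> A\<close> by blast
  have "card (\<Union>(N ` T)) - 1 \<le> card (\<Union>(N ` T) - {b})"
    by (simp add: card_Diff_singleton_if)
  also have "\<Union>(N ` T) - {b} = (\<Union>x\<in>T. N x - {b})" by blast
  finally show ?thesis using lt by linarith
qed simp

lemma ex_inj_representatives_Un:
  assumes f: "inj_on f S" "\<forall>a\<in>S. f a \<in> N a"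
    and g: "inj_on g T" "\<forall>a\<in>T. g a \<in> N a - f ` S" and "S \<inter> T = {}"
  shows "\<exists>h. inj_on h (S \<union> T) \<and> (\<forall>a\<in>S \<union> T. h a \<in> N a)"
proof -
  define h where "h a = (if a \<in> S then f a else g a)" for a
  have "inj_on h S" using f(1) by (simp add: h_def inj_on_def)
  moreover have "inj_on h T" using g(1) \<open>S \<inter> T = {}\<close> by (auto simp: h_def inj_on_def)
  moreover have "h ` (S - T) \<subseteq> f ` S" "h ` (T - S) \<inter> f ` S = {}" using g(2) by (auto simp: h_def)
  then have "h ` (S - T) \<inter> h ` (T - S) = {}" by blast
  ultimately have "inj_on h (S \<union> T)" by (simp add: inj_on_Un)
  moreover have "\<forall>a\<in>S \<union> T. h a \<in> N a" using f(2) g(2) by (auto simp: h_def)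
  ultimately show ?thesis by blast
qed

theorem hall_marriage:
  assumes "finite A" and "\<And>S. S \<subseteq> A \<Longrightarrow> card S \<le> card (\<Union>(N ` S))"
  shows "\<exists>f. inj_on f A \<and> (\<forall>a\<in>A. f a \<in> N a)"
  using assms
proof (induction "card A" arbitrary: A N rule: less_induct)
  case less
  consider (empty) "A = {}"
    | (tight) S where "S \<noteq> {}" "S \<subset> A" "card (\<Union>(N ` S)) \<le> card S"
    | (surplus) a where "a \<in> A" "\<And>S. S \<noteq> {} \<Longrightarrow> S \<subset> A \<Longrightarrow> card S < card (\<Union>(N ` S))"
    by (meson ex_in_conv not_le)
  then show ?case
  proof cases
    case empty
    then show ?thesis by simp
  next
    case tight
    have "S \<subseteq> A" "A - S \<subset> A" using tight by blast+
    have "finite S" "finite (A - S)" using \<open>S \<subseteq> A\<close> finite_subset[OF _ less.prems(1)] by blast+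
    have "card S < card A" "card (A - S) < card A"
      using psubset_card_mono[OF less.prems(1)] tight(2) \<open>A - S \<subset> A\<close> by blast+
    have hall_S: "card T \<le> card (\<Union>(N ` T))" if "T \<subseteq> S" for T
      using that \<open>S \<subseteq> A\<close> less.prems(2) by blast
    have hall_A_S: "card T \<le> card (\<Union>a\<in>T. N a - \<Union>(N ` S))" if "T \<subseteq> A - S" for T
      using hall_condition_minus_tight_set[OF less.prems(2,1) \<open>S \<subseteq> A\<close> tight(3) that] .
    obtain f where f: "inj_on f S" "\<forall>a\<in>S. f a \<in> N a"
      using less.hyps[OF \<open>card S < card A\<close> \<open>finite S\<close> hall_S] by blast
    obtain g where g: "inj_on g (A - S)" "\<forall>a\<in>A - S. g a \<in> N a - \<Union>(N ` S)"
      using less.hyps[OF \<open>card (A - S) < card A\<close> \<open>finite (A - S)\<close> hall_A_S] by blast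
    moreover have "f ` S \<subseteq> \<Union>(N ` S)" using f(2) by blast
    ultimately have "\<forall>a\<in>A - S. g a \<in> N a - f ` S" by blast
    moreover have "S \<inter> (A - S) = {}" by blast
    ultimately obtain h where "inj_on h (S \<union> (A - S))" "\<forall>a\<in>S \<union> (A - S). h a \<in> N a"
      using ex_inj_representatives_Un[OF f g(1)] by blast
    moreover have "S \<union> (A - S) = A" using tight(2) by blast
    ultimately show ?thesis by auto
  next
    case surplus
    have "N a \<noteq> {}" using less.prems(2)[of "{a}"] surplus(1) by auto
    then obtain b where "b \<in> N a" by blast
    have "card (A - {a}) < card A" by (rule card_Diff1_less[OF less.prems(1) surplus(1)])
    then obtain g where "inj_on g (A - {a})" "\<forall>x\<in>A - {a}. g x \<in> N x - (\<lambda>_. b) ` {a}"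
      using less.hyps[of "A - {a}" "\<lambda>x. N x - {b}"] less.prems(1)
        hall_condition_minus_point[OF surplus(2) surplus(1)] by auto
    then obtain h where "inj_on h ({a} \<union> (A - {a}))" "\<forall>x\<in>{a} \<union> (A - {a}). h x \<in> N x"
      using ex_inj_representatives_Un[of "\<lambda>_. b" "{a}" N] \<open>b \<in> N a\<close> by blast
    moreover have "{a} \<union> (A - {a}) = A" using surplus(1) by blast
    ultimately show ?thesis by auto
  qed
qed

lemma hall_deficiency:
  assumes "finite A" "\<And>a. a \<in> A \<Longrightarrow> finite (N a)"
    and "\<And>S. S \<subseteq> A \<Longrightarrow> card S \<le> card (\<Union>(N ` S)) + d"
  shows "\<exists>A' f. A' \<subseteq> A \<and> card A \<le> card A' + d \<and> inj_on f A' \<and> (\<forall>a\<in>A'. f a \<in> N a)"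
proof -
  \<comment> \<open>Give every \<open>a\<close> the same \<open>d\<close> extra representatives; Hall's condition then holds,
    and the elements of \<open>A\<close> matched to genuine representatives form \<open>A'\<close>.\<close>
  define N' where "N' a = N a <+> {..<d}" for a
  have "card S \<le> card (\<Union>(N' ` S))" if "S \<subseteq> A" for S
  proof (cases "S = {}")
    case False
    have "finite (\<Union>(N ` S))" using that assms(1,2) finite_subset by blast
    moreover have "\<Union>(N' ` S) = \<Union>(N ` S) <+> {..<d}" using False by (auto simp: N'_def)
    ultimately show ?thesis using assms(3)[OF that] by (simp add: card_Plus)
  qed simp
  then obtain g where g: "inj_on g A" "\<forall>a\<in>A. g a \<in> N' a"
    using hall_marriage[OF assms(1)] by blast
  define A' where "A' = {a \<in> A. isl (g a)}"
  have "card (A - A') \<le> d"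
  proof -
    have "g ` (A - A') \<subseteq> Inr ` {..<d}" using g(2) by (auto simp: A'_def N'_def)
    from card_mono[OF _ this] have "card (g ` (A - A')) \<le> d" by (simp add: card_image inj_on_def)
    then show ?thesis using g(1) by (simp add: card_image inj_on_subset)
  qed
  moreover have "inj_on (projl \<circ> g) A'"
    using g(1) by (auto simp: A'_def inj_on_def isl_def)
  moreover have "\<forall>a\<in>A'. (projl \<circ> g) a \<in> N a" using g(2) by (auto simp: A'_def N'_def)
  moreover have "A' \<subseteq> A" "card A \<le> card A' + card (A - A')"
    using assms(1) by (auto simp: A'_def card_Diff_subset card_mono)
  ultimately show ?thesis by (meson add_le_mono1 le_trans add_left_mono)
qed

section \<open>The Koenig-Egervary theorem\<close>

lemma ex_max_deficiency:
  assumes "finite A"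
  obtains S d where "S \<subseteq> A" "card S = card (\<Union>(N ` S)) + d"
    "\<And>T. T \<subseteq> A \<Longrightarrow> card T \<le> card (\<Union>(N ` T)) + d"
proof -
  define deficiency where "deficiency T = card T - card (\<Union>(N ` T))" for T
  have "finite (deficiency ` Pow A)" "deficiency ` Pow A \<noteq> {}" using assms by auto
  then have "Max (deficiency ` Pow A) \<in> deficiency ` Pow A" by (rule Max_in)
  then obtain S where S: "S \<subseteq> A" "deficiency S = Max (deficiency ` Pow A)" by auto
  have max: "deficiency T \<le> deficiency S" if "T \<subseteq> A" for T
    using S(2) Max_ge[OF \<open>finite (deficiency ` Pow A)\<close>] that by simp
  have bound: "card T \<le> card (\<Union>(N ` T)) + deficiency S" if "T \<subseteq> A" for T
    using max[OF that] unfolding deficiency_def by linarith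
  show ?thesis
  proof (cases "card (\<Union>(N ` S)) \<le> card S")
    case True
    then have "card S = card (\<Union>(N ` S)) + deficiency S" unfolding deficiency_def by linarith
    then show ?thesis using that S(1) bound by blast
  next
    case False
    \<comment> \<open>truncated subtraction: the maximum deficiency is then \<open>0\<close>, attained by \<open>{}\<close>\<close>
    then have "deficiency S = 0" unfolding deficiency_def by linarith
    then show ?thesis using that[of "{}" 0] bound by simp
  qed
qed

lemma matching_of_injective_pairing:
  assumes "X \<inter> Y = {}" "inj_on f X" "\<forall>x\<in>X. f x \<in> Y \<and> {x, f x} \<in> E"
  shows "matching E ((\<lambda>x. {x, f x}) ` X)" "card ((\<lambda>x. {x, f x}) ` X) = card X"
proof -
  have distinct: "{x, f x} \<inter> {y, f y} = {}" if "x \<in> X" "y \<in> X" "x \<noteq> y" for x y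
  proof -
    have "f x \<noteq> f y" using inj_onD[OF assms(2)] that by blast
    moreover have "f x \<in> Y" "f y \<in> Y" using assms(3) that by auto
    ultimately show ?thesis using that assms(1) by auto
  qed
  show "matching E ((\<lambda>x. {x, f x}) ` X)"
    unfolding matching_def
  proof (intro conjI ballI impI)
    show "(\<lambda>x. {x, f x}) ` X \<subseteq> E" using assms(3) by auto
    fix e e' assume "e \<in> (\<lambda>x. {x, f x}) ` X" "e' \<in> (\<lambda>x. {x, f x}) ` X" "e \<noteq> e'"
    then obtain x y where "x \<in> X" "y \<in> X" "e = {x, f x}" "e' = {y, f y}" "x \<noteq> y" by blast
    then show "e \<inter> e' = {}" using distinct by blast
  qed
  have "inj_on (\<lambda>x. {x, f x}) X"
  proof (rule inj_onI)
    fix x y assume "x \<in> X" "y \<in> X" "{x, f x} = {y, f y}"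
    then show "x = y" using distinct[of x y] by blast
  qed
  then show "card ((\<lambda>x. {x, f x}) ` X) = card X" by (rule card_image)
qed

definition vertex_cover :: "'a set \<Rightarrow> 'a set set \<Rightarrow> 'a set \<Rightarrow> bool" where
  "vertex_cover V E C \<longleftrightarrow> C \<subseteq> V \<and> (\<forall>e\<in>E. e \<inter> C \<noteq> {})"

theorem konig_egervary:
  assumes "simple_graph V E" "bipartite V E"
  obtains C M where "vertex_cover V E C" "matching E M" "card C \<le> card M"
proof -
  obtain X Y where XY: "X \<union> Y = V" "X \<inter> Y = {}" "\<forall>e\<in>E. e \<inter> X \<noteq> {} \<and> e \<inter> Y \<noteq> {}"
    using assms(2) unfolding bipartite_def by blast
  have "finite V" and edges: "\<forall>e\<in>E. e \<subseteq> V \<and> card e = 2"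
    using assms(1) unfolding simple_graph_def by auto
  then have "finite X" "finite Y" using XY(1) by auto
  define nbrs where "nbrs x = {y \<in> Y. {x, y} \<in> E}" for x
  have "finite (nbrs x)" for x using \<open>finite Y\<close> by (simp add: nbrs_def)
  obtain S d where S: "S \<subseteq> X" "card S = card (\<Union>(nbrs ` S)) + d"
    and deficiency: "\<And>T. T \<subseteq> X \<Longrightarrow> card T \<le> card (\<Union>(nbrs ` T)) + d"
    using ex_max_deficiency[OF \<open>finite X\<close>] by blast
  obtain X' f where X': "X' \<subseteq> X" "card X \<le> card X' + d"
    and f: "inj_on f X'" "\<forall>x\<in>X'. f x \<in> nbrs x"
    using hall_deficiency[OF \<open>finite X\<close> \<open>\<And>x. finite (nbrs x)\<close> deficiency] by blast
  have "X' \<inter> Y = {}" using X'(1) XY(2) by blast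
  then have M: "matching E ((\<lambda>x. {x, f x}) ` X')" "card ((\<lambda>x. {x, f x}) ` X') = card X'"
    using matching_of_injective_pairing[OF _ f(1)] f(2) by (auto simp: nbrs_def)
  \<comment> \<open>Every edge leaving \<open>S\<close> ends in \<open>nbrs ` S\<close>, so this covers; a set of maximum deficiency
    makes it as small as the matching.\<close>
  define C where "C = (X - S) \<union> \<Union>(nbrs ` S)"
  have "vertex_cover V E C"
    unfolding vertex_cover_def
  proof
    show "C \<subseteq> V" using XY(1) by (auto simp: C_def nbrs_def)
    show "\<forall>e\<in>E. e \<inter> C \<noteq> {}"
    proof
      fix e assume "e \<in> E"
      then obtain x y where "x \<in> X" "y \<in> Y" "x \<in> e" "y \<in> e" using XY(3) by blast
      moreover have "x \<noteq> y" using calculation XY(2) by blast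
      moreover obtain u v where "e = {u, v}" using edges \<open>e \<in> E\<close> by (meson card_2_iff)
      ultimately have "e = {x, y}" by auto
      then show "e \<inter> C \<noteq> {}"
        using \<open>x \<in> X\<close> \<open>y \<in> Y\<close> \<open>e \<in> E\<close> by (cases "x \<in> S") (auto simp: C_def nbrs_def)
    qed
  qed
  moreover have "card C \<le> card X'"
  proof -
    have "card C \<le> card (X - S) + card (\<Union>(nbrs ` S))" unfolding C_def by (rule card_Un_le)
    moreover have "card (X - S) = card X - card S" using S(1) \<open>finite X\<close> by (simp add: card_Diff_subset finite_subset)
    moreover have "card S \<le> card X" using S(1) \<open>finite X\<close> by (rule card_mono[rotated])
    ultimately show ?thesis using S(2) X'(2) by linarith
  qed
  ultimately show ?thesis using M that by metis
qed

section \<open>Matching, independence and dissociation numbers\<close>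

lemma finite_card_image_of_subsets:
  assumes "finite V" "\<And>I. P I \<Longrightarrow> I \<subseteq> V"
  shows "finite (card ` {I. P I})"
  by (rule finite_subset[of _ "card ` Pow V"]) (use assms in auto)

lemma card_le_Max_card:
  assumes "finite V" "\<And>I. P I \<Longrightarrow> I \<subseteq> V" "P I"
  shows "card I \<le> Max (card ` {I. P I})"
  using finite_card_image_of_subsets[OF assms(1,2)] assms(3) by simp

lemma ex_card_eq_Max_card:
  assumes "finite V" "\<And>I. P I \<Longrightarrow> I \<subseteq> V" "P I"
  shows "\<exists>J. P J \<and> card J = Max (card ` {I. P I})"
proof -
  have "Max (card ` {I. P I}) \<in> card ` {I. P I}"
    using finite_card_image_of_subsets[OF assms(1,2)] assms(3) by (intro Max_in) auto
  then show ?thesis by auto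
qed

definition matching_number :: "'a set set \<Rightarrow> nat" where
  "matching_number E = Max (card ` {M. matching E M})"

lemma simple_graph_finite_edges: "simple_graph V E \<Longrightarrow> finite E"
  unfolding simple_graph_def by (meson Pow_iff finite_Pow_iff finite_subset subsetI)

lemma card_matching_le_matching_number:
  "finite E \<Longrightarrow> matching E M \<Longrightarrow> card M \<le> matching_number E"
  unfolding matching_number_def by (rule card_le_Max_card) (auto simp: matching_def)

lemma ex_matching_card_eq_matching_number:
  assumes "finite E"
  obtains M where "matching E M" "card M = matching_number E"
proof -
  have "matching E {}" "\<And>M. matching E M \<Longrightarrow> M \<subseteq> E" by (simp_all add: matching_def)
  then show ?thesis
    using that ex_card_eq_Max_card[OF assms, of "matching E"] unfolding matching_number_def by blast
qed

lemma maximum_matching_iff: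
  "finite E \<Longrightarrow> maximum_matching E M \<longleftrightarrow> matching E M \<and> card M = matching_number E"
  unfolding maximum_matching_def
  by (metis card_matching_le_matching_number ex_matching_card_eq_matching_number le_antisym)

lemma matching_edges_eq_if_common_vertex:
  assumes "matching E M" "e \<in> M" "e' \<in> M" "v \<in> e" "v \<in> e'"
  shows "e = e'"
  using assms unfolding matching_def by blast

lemma card_matching_le_card_transversal:
  assumes "matching E M" "finite X" "\<forall>e\<in>M. e \<inter> X \<noteq> {}"
  shows "card M \<le> card X"
proof -
  have "\<forall>e\<in>M. \<exists>x. x \<in> e \<inter> X" using assms(3) by blast
  then obtain h where h: "\<forall>e\<in>M. h e \<in> e \<inter> X" by (metis bchoice)
  have "inj_on h M"
  proof (rule inj_onI)
    fix e e' assume "e \<in> M" "e' \<in> M" "h e = h e'"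
    then have "h e \<in> e" "h e \<in> e'" using h by (metis IntD1)+
    then show "e = e'" by (rule matching_edges_eq_if_common_vertex[OF assms(1) \<open>e \<in> M\<close> \<open>e' \<in> M\<close>])
  qed
  moreover have "h ` M \<subseteq> X" using h by blast
  ultimately show ?thesis using assms(2) by (rule card_inj_on_le)
qed

lemma card_matching_add_card_le:
  assumes "matching E M" "finite V" "I \<subseteq> V" "\<forall>e\<in>M. e \<subseteq> V \<and> \<not> e \<subseteq> I"
  shows "card M + card I \<le> card V"
proof -
  have "\<forall>e\<in>M. e \<inter> (V - I) \<noteq> {}" using assms(4) by blast
  then have "card M \<le> card (V - I)"
    by (rule card_matching_le_card_transversal[OF assms(1) finite_Diff[OF assms(2)]])
  moreover have "card (V - I) = card V - card I" using assms(2,3) by (simp add: card_Diff_subset finite_subset)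
  moreover have "card I \<le> card V" using assms(2,3) by (rule card_mono)
  ultimately show ?thesis by linarith
qed

lemma simple_graph_mono: "simple_graph V E \<Longrightarrow> E' \<subseteq> E \<Longrightarrow> simple_graph V E'"
  unfolding simple_graph_def by blast

lemma bipartite_mono:
  assumes "bipartite V E" "E' \<subseteq> E"
  shows "bipartite V E'"
proof -
  obtain A B where "A \<union> B = V" "A \<inter> B = {}" "\<forall>e\<in>E. e \<inter> A \<noteq> {} \<and> e \<inter> B \<noteq> {}"
    using assms(1) unfolding bipartite_def by blast
  then show ?thesis unfolding bipartite_def using assms(2) by (intro exI[of _ A] exI[of _ B]) auto
qed

lemma card_2_obtain_other:
  assumes "card e = 2" "v \<in> e"
  obtains u where "u \<noteq> v" "e = {v, u}"
  using assms by (metis card_2_iff insert_commute insertE singletonD)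

lemma independent_set_not_contains_edge:
  assumes "independent_set V E I" "e \<in> E" "card e = 2"
  shows "\<not> e \<subseteq> I"
  using assms by (metis card_2_iff independent_set_def insert_subset)

lemma independent_imp_dissociation_set:
  assumes "independent_set V E I"
  shows "dissociation_set V E I"
proof -
  have "card {u \<in> I. {u, v} \<in> E} \<le> 1" if "v \<in> I" for v
  proof -
    have "{u \<in> I. {u, v} \<in> E} = {}" using assms that unfolding independent_set_def by blast
    then show ?thesis by (simp only: card.empty zero_le)
  qed
  moreover have "I \<subseteq> V" using assms by (simp add: independent_set_def)
  ultimately show ?thesis unfolding dissociation_set_def by blast
qed

lemma card_le_independence_number:
  "finite V \<Longrightarrow> independent_set V E I \<Longrightarrow> card I \<le> independence_number V E"
  unfolding independence_number_def by (rule card_le_Max_card) (auto simp: independent_set_def)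

lemma ex_maximum_independent_set:
  assumes "finite V"
  shows "\<exists>I. independent_set V E I \<and> card I = independence_number V E"
  unfolding independence_number_def
  by (rule ex_card_eq_Max_card[OF assms, where I = "{}"]) (auto simp: independent_set_def)

lemma card_le_diss:
  "finite V \<Longrightarrow> dissociation_set V E D \<Longrightarrow> card D \<le> diss V E"
  unfolding diss_def by (rule card_le_Max_card) (auto simp: dissociation_set_def)

lemma ex_maximum_dissociation_set:
  assumes "finite V"
  shows "\<exists>D. dissociation_set V E D \<and> card D = diss V E"
  unfolding diss_def
  by (rule ex_card_eq_Max_card[OF assms, where I = "{}"]) (auto simp: dissociation_set_def)

lemma independence_number_le_diss:
  assumes "finite V"
  shows "independence_number V E \<le> diss V E"
proof -
  obtain I where "independent_set V E I" "card I = independence_number V E"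
    using ex_maximum_independent_set[OF assms] by blast
  then show ?thesis using card_le_diss[OF assms independent_imp_dissociation_set] by metis
qed

lemma independent_set_Diff_vertex_cover:
  assumes "vertex_cover V E C"
  shows "independent_set V E (V - C)"
  unfolding independent_set_def
proof (intro conjI ballI)
  fix u v assume "u \<in> V - C" "v \<in> V - C"
  then have "{u, v} \<inter> C = {}" by blast
  then show "{u, v} \<notin> E" using assms unfolding vertex_cover_def by blast
qed blast

lemma independence_number_add_matching_number:
  assumes "simple_graph V E" "bipartite V E"
  shows "independence_number V E + matching_number E = card V"
proof -
  have "finite V" and edges: "\<forall>e\<in>E. e \<subseteq> V \<and> card e = 2" and "finite E"
    using assms(1) simple_graph_finite_edges by (auto simp: simple_graph_def)
  obtain C M where C: "vertex_cover V E C" "matching E M" "card C \<le> card M"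
    using konig_egervary[OF assms] .
  have "card (V - C) \<le> independence_number V E"
    using card_le_independence_number[OF \<open>finite V\<close> independent_set_Diff_vertex_cover[OF C(1)]] .
  moreover have "card (V - C) = card V - card C" "card C \<le> card V"
    using C(1) \<open>finite V\<close> by (auto simp: vertex_cover_def card_Diff_subset finite_subset card_mono)
  moreover have "card M \<le> matching_number E"
    by (rule card_matching_le_matching_number[OF \<open>finite E\<close> C(2)])
  moreover obtain I where I: "independent_set V E I" "card I = independence_number V E"
    using ex_maximum_independent_set[OF \<open>finite V\<close>] by blast
  moreover obtain M' where M': "matching E M'" "card M' = matching_number E"
    using ex_matching_card_eq_matching_number[OF \<open>finite E\<close>] .
  moreover have "card M' + card I \<le> card V"
  proof (rule card_matching_add_card_le[OF M'(1) \<open>finite V\<close>])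
    show "I \<subseteq> V" using I(1) by (simp add: independent_set_def)
    show "\<forall>e\<in>M'. e \<subseteq> V \<and> \<not> e \<subseteq> I"
    proof
      fix e assume "e \<in> M'"
      then have "e \<in> E" using M'(1) by (auto simp: matching_def)
      then show "e \<subseteq> V \<and> \<not> e \<subseteq> I"
        using edges independent_set_not_contains_edge[OF I(1) \<open>e \<in> E\<close>] by simp
    qed
  qed
  ultimately show ?thesis using C(3) by linarith
qed

lemma dissociation_set_if_inner_edges_in_matching:
  assumes "matching E N" "D \<subseteq> V" "\<forall>e\<in>E. e \<subseteq> D \<longrightarrow> e \<in> N"
  shows "dissociation_set V E D"
proof -
  have "card {u \<in> D. {u, v} \<in> E} \<le> 1" if "v \<in> D" for v
  proof (cases "finite {u \<in> D. {u, v} \<in> E}")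
    case True
    have "u = w" if "u \<in> D" "{u, v} \<in> E" "w \<in> D" "{w, v} \<in> E" for u w
    proof -
      have "{u, v} \<in> N" "{w, v} \<in> N" using assms(3) that \<open>v \<in> D\<close> by auto
      then have "{u, v} = {w, v}" using matching_edges_eq_if_common_vertex[OF assms(1)] by blast
      then show ?thesis by (auto simp: doubleton_eq_iff)
    qed
    then show ?thesis using True by (simp add: card_le_Suc0_iff_eq)
  qed simp
  then show ?thesis using assms(2) by (simp add: dissociation_set_def)
qed

lemma induced_matching_inner_edges:
  assumes "simple_graph V E" "dissociation_set V E D"
  shows "induced_matching E {e \<in> E. e \<subseteq> D}"
proof -
  have "e \<inter> e' = {}" if "e \<in> E" "e \<subseteq> D" "e' \<in> E" "e' \<subseteq> D" "e \<noteq> e'" for e e'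
  proof (rule ccontr)
    assume "e \<inter> e' \<noteq> {}"
    then obtain v where "v \<in> e" "v \<in> e'" by blast
    moreover have "card e = 2" "card e' = 2" using assms(1) that unfolding simple_graph_def by auto
    ultimately obtain u w where "e = {v, u}" "e' = {v, w}"
      using card_2_obtain_other by metis
    then have "u \<noteq> w" and sub: "{u, w} \<subseteq> {x \<in> D. {x, v} \<in> E}"
      using that by (auto simp: insert_commute)
    have "{x \<in> D. {x, v} \<in> E} \<subseteq> V" using assms(2) unfolding dissociation_set_def by blast
    then have "finite {x \<in> D. {x, v} \<in> E}"
      using assms(1) finite_subset unfolding simple_graph_def by blast
    then have "2 \<le> card {x \<in> D. {x, v} \<in> E}" using card_mono[OF _ sub] \<open>u \<noteq> w\<close> by simp
    moreover have "v \<in> D" using \<open>v \<in> e\<close> that(2) by blast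
    ultimately show False using assms(2) unfolding dissociation_set_def by fastforce
  qed
  then show ?thesis unfolding induced_matching_def matching_def by blast
qed

lemma card_less_diss_add_matching_number:
  assumes "simple_graph V E" "bipartite V E" "induced_matching E N"
    and "\<forall>M. maximum_matching E M \<longrightarrow> M \<inter> N \<noteq> {}"
  shows "card V < diss V E + matching_number E"
proof -
  have "finite V" "finite E" using assms(1) simple_graph_finite_edges by (auto simp: simple_graph_def)
  have "matching E N" using assms(3) by (simp add: induced_matching_def)
  obtain C M where C: "vertex_cover V (E - N) C" "matching (E - N) M" "card C \<le> card M"
    using konig_egervary[OF simple_graph_mono[OF assms(1) Diff_subset]
        bipartite_mono[OF assms(2) Diff_subset]] .
  have "matching E M" "M \<inter> N = {}" using C(2) by (auto simp: matching_def)
  then have "card M < matching_number E"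
    using assms(4) card_matching_le_matching_number[OF \<open>finite E\<close>] maximum_matching_iff[OF \<open>finite E\<close>]
    by (metis le_neq_implies_less)
  moreover have "dissociation_set V E (V - C)"
    using C(1) by (intro dissociation_set_if_inner_edges_in_matching[OF \<open>matching E N\<close>])
      (auto simp: vertex_cover_def)
  then have "card (V - C) \<le> diss V E" by (rule card_le_diss[OF \<open>finite V\<close>])
  moreover have "card (V - C) = card V - card C" "card C \<le> card V"
    using C(1) \<open>finite V\<close> by (auto simp: vertex_cover_def card_Diff_subset finite_subset card_mono)
  ultimately show ?thesis using C(3) by linarith
qed

lemma ex_induced_matching_meeting_maximum_matchings:
  assumes "simple_graph V E" "card V < diss V E + matching_number E"
  shows "\<exists>N. induced_matching E N \<and> (\<forall>M. maximum_matching E M \<longrightarrow> M \<inter> N \<noteq> {})"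
proof -
  have "finite V" "finite E" and edges: "\<forall>e\<in>E. e \<subseteq> V"
    using assms(1) simple_graph_finite_edges by (auto simp: simple_graph_def)
  obtain D where D: "dissociation_set V E D" "card D = diss V E"
    using ex_maximum_dissociation_set[OF \<open>finite V\<close>] by blast
  have "M \<inter> {e \<in> E. e \<subseteq> D} \<noteq> {}" if "maximum_matching E M" for M
  proof
    assume no_inner: "M \<inter> {e \<in> E. e \<subseteq> D} = {}"
    have "matching E M" "card M = matching_number E"
      using that maximum_matching_iff[OF \<open>finite E\<close>] by auto
    have "\<forall>e\<in>M. e \<subseteq> V \<and> \<not> e \<subseteq> D"
    proof
      fix e assume "e \<in> M"
      then have "e \<in> E" using \<open>matching E M\<close> by (auto simp: matching_def)
      then show "e \<subseteq> V \<and> \<not> e \<subseteq> D" using edges no_inner \<open>e \<in> M\<close> by blast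
    qed
    moreover have "D \<subseteq> V" using D(1) by (simp add: dissociation_set_def)
    ultimately have "card M + card D \<le> card V"
      using card_matching_add_card_le[OF \<open>matching E M\<close> \<open>finite V\<close>] by blast
    then show False using assms(2) D(2) \<open>card M = matching_number E\<close> by linarith
  qed
  then show ?thesis using induced_matching_inner_edges[OF assms(1) D(1)] by blast
qed

theorem mainTheorem7:
  fixes V :: "'a set" and E :: "'a set set"
  assumes "simple_graph V E" and "bipartite V E"
  shows "diss V E = independence_number V E \<longleftrightarrow>
    \<not> (\<exists>N. induced_matching E N \<and> (\<forall>M. maximum_matching E M \<longrightarrow> M \<inter> N \<noteq> {}))"
proof -
  have "independence_number V E \<le> diss V E"
    using assms(1) by (intro independence_number_le_diss) (simp add: simple_graph_def)
  moreover have "independence_number V E + matching_number E = card V"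
    by (rule independence_number_add_matching_number[OF assms])
  ultimately have "diss V E = independence_number V E \<longleftrightarrow> \<not> card V < diss V E + matching_number E"
    by linarith
  then show ?thesis
    using card_less_diss_add_matching_number[OF assms] ex_induced_matching_meeting_maximum_matchings[OF assms(1)]
    by blast
qed

end
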